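(* Let $\mathcal{P}=((\mathcal{S},\mathcal{T}),(\mathcal{U},\mathcal{V}))$ be a twin cotorsion pair on a triangulated category $\mathcal{C}$ with associated functor $H\colon\mathcal{C}\to\mathcal{H}/\mathcal{W}$. For any $C\in\mathcal{C}$ the following are equivalent: (1) $H(C)=0$; (2) $\tau^-(C)$ is isomorphic in $\mathcal{C}/\mathcal{W}$ to an object of $\mathcal{U}$; (3) $\tau^+(C)$ is isomorphic in $\mathcal{C}/\mathcal{W}$ to an object of $\mathcal{T}$.
   Context: For full subcategories $\mathcal{X},\mathcal{Y}$, $\mathcal{X}*\mathcal{Y}$ is the full subcategory of objects $C$ admitting a distinguished triangle $X\to C\to Y\to X[1]$ with $X\in\mathcal{X}$, $Y\in\mathcal{Y}$. A cotorsion pair $(\mathcal{A},\mathcal{B})$: full subcategories closed under isomorphisms, finite direct sums and summands with $\mathcal{C}=\mathcal{A}*\mathcal{B}[1]$ and $\mathcal{C}(\mathcal{A},\mathcal{B}[1])=0$. A twin cotorsion pair $((\mathcal{S},\mathcal{T}),(\mathcal{U},\mathcal{V}))$: two cotorsion pairs with $\mathcal{C}(\mathcal{S},\mathcal{V}[1])=0$. Associated data: $\mathcal{W}=\mathcal{U}\cap\mathcal{T}$, $\mathcal{C}^+=\mathcal{W}*\mathcal{V}[1]$, $\mathcal{C}^-=\mathcal{S}[-1]*\mathcal{W}$, $\mathcal{H}=\mathcal{C}^+\cap\mathcal{C}^-$; ideal quotients $\mathcal{C}/\mathcal{W}$, $\mathcal{H}/\mathcal{W}$ by morphisms factoring through objects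 of $\mathcal{W}$; $\tau^+$ left adjoint of $\mathcal{C}^+/\mathcal{W}\hookrightarrow\mathcal{C}/\mathcal{W}$, $\tau^-$ right adjoint of $\mathcal{C}^-/\mathcal{W}\hookrightarrow\mathcal{C}/\mathcal{W}$ (values of $\tau^\pm$ regarded in $\mathcal{C}/\mathcal{W}$); $H$ is the quotient functor $\mathcal{C}\to\mathcal{C}/\mathcal{W}$ followed by $\tau^+\tau^-$. *)

theory Defs
  imports Main
begin

text \<open>All elements of type 'o are objects.  hom X Y is the set of morphisms X to Y;
cmp g f is the composite g after f.\<close>

record ('o, 'm) tricat =
  hom   :: "'o \<Rightarrow> 'o \<Rightarrow> 'm set"
  cmp   :: "'m \<Rightarrow> 'm \<Rightarrow> 'm"
  idm   :: "'o \<Rightarrow> 'm"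
  madd  :: "'m \<Rightarrow> 'm \<Rightarrow> 'm"
  mneg  :: "'m \<Rightarrow> 'm"
  mzero :: "'o \<Rightarrow> 'o \<Rightarrow> 'm"
  shO   :: "'o \<Rightarrow> 'o"
  shM   :: "'m \<Rightarrow> 'm"
  dtri  :: "'o \<Rightarrow> 'o \<Rightarrow> 'o \<Rightarrow> 'm \<Rightarrow> 'm \<Rightarrow> 'm \<Rightarrow> bool"

definition category :: "('o, 'm) tricat \<Rightarrow> bool" where
  "category C \<longleftrightarrow>
     (\<forall>X. idm C X \<in> hom C X X) \<and>
     (\<forall>X Y Z f g. f \<in> hom C X Y \<longrightarrow> g \<in> hom C Y Z \<longrightarrow> cmp C g f \<in> hom C X Z) \<and>
     (\<forall>X Y Z W f g h. f \<in> hom C X Y \<longrightarrow> g \<in> hom C Y Z \<longrightarrow> h \<in> hom C Z W \<longrightarrow>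
        cmp C h (cmp C g f) = cmp C (cmp C h g) f) \<and>
     (\<forall>X Y f. f \<in> hom C X Y \<longrightarrow> cmp C f (idm C X) = f \<and> cmp C (idm C Y) f = f)"

definition preadditive :: "('o, 'm) tricat \<Rightarrow> bool" where
  "preadditive C \<longleftrightarrow> category C \<and>
     (\<forall>X Y. mzero C X Y \<in> hom C X Y \<and>
        (\<forall>f\<in>hom C X Y. \<forall>g\<in>hom C X Y. madd C f g \<in> hom C X Y) \<and>
        (\<forall>f\<in>hom C X Y. mneg C f \<in> hom C X Y) \<and>
        (\<forall>f\<in>hom C X Y. \<forall>g\<in>hom C X Y. \<forall>h\<in>hom C X Y.
            madd C (madd C f g) h = madd C f (madd C g h)) \<and>
        (\<forall>f\<in>hom C X Y. \<forall>g\<in>hom C X Y. madd C f g = madd C g f) \<and>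
        (\<forall>f\<in>hom C X Y. madd C (mzero C X Y) f = f) \<and>
        (\<forall>f\<in>hom C X Y. madd C (mneg C f) f = mzero C X Y)) \<and>
     (\<forall>X Y Z f1 f2 g. f1 \<in> hom C X Y \<longrightarrow> f2 \<in> hom C X Y \<longrightarrow> g \<in> hom C Y Z \<longrightarrow>
        cmp C g (madd C f1 f2) = madd C (cmp C g f1) (cmp C g f2)) \<and>
     (\<forall>X Y Z f g1 g2. f \<in> hom C X Y \<longrightarrow> g1 \<in> hom C Y Z \<longrightarrow> g2 \<in> hom C Y Z \<longrightarrow>
        cmp C (madd C g1 g2) f = madd C (cmp C g1 f) (cmp C g2 f))"

definition zero_obj :: "('o, 'm) tricat \<Rightarrow> 'o \<Rightarrow> bool" where
  "zero_obj C Z \<longleftrightarrow> idm C Z = mzero C Z Z"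

definition is_biproduct :: "('o, 'm) tricat \<Rightarrow> 'o \<Rightarrow> 'o \<Rightarrow> 'o \<Rightarrow> bool" where
  "is_biproduct C X Y B \<longleftrightarrow>
     (\<exists>i1\<in>hom C X B. \<exists>i2\<in>hom C Y B. \<exists>p1\<in>hom C B X. \<exists>p2\<in>hom C B Y.
        cmp C p1 i1 = idm C X \<and> cmp C p2 i2 = idm C Y \<and>
        cmp C p2 i1 = mzero C X Y \<and> cmp C p1 i2 = mzero C Y X \<and>
        madd C (cmp C i1 p1) (cmp C i2 p2) = idm C B)"

definition additive :: "('o, 'm) tricat \<Rightarrow> bool" where
  "additive C \<longleftrightarrow> preadditive C \<and> (\<exists>Z. zero_obj C Z) \<and>
     (\<forall>X Y. \<exists>B. is_biproduct C X Y B)"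

definition isomorphism :: "('o, 'm) tricat \<Rightarrow> 'o \<Rightarrow> 'o \<Rightarrow> 'm \<Rightarrow> bool" where
  "isomorphism C X Y f \<longleftrightarrow> f \<in> hom C X Y \<and>
     (\<exists>g\<in>hom C Y X. cmp C g f = idm C X \<and> cmp C f g = idm C Y)"

definition iso :: "('o, 'm) tricat \<Rightarrow> 'o \<Rightarrow> 'o \<Rightarrow> bool" where
  "iso C X Y \<longleftrightarrow> (\<exists>f. isomorphism C X Y f)"

definition triangulated :: "('o, 'm) tricat \<Rightarrow> bool" where
  "triangulated C \<longleftrightarrow> additive C \<and>
     \<comment> \<open>the shift is an additive automorphism\<close>
     (\<forall>X Y f. f \<in> hom C X Y \<longrightarrow> shM C f \<in> hom C (shO C X) (shO C Y)) \<and>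
     (\<forall>X. shM C (idm C X) = idm C (shO C X)) \<and>
     (\<forall>X Y Z f g. f \<in> hom C X Y \<longrightarrow> g \<in> hom C Y Z \<longrightarrow>
        shM C (cmp C g f) = cmp C (shM C g) (shM C f)) \<and>
     (\<forall>X Y f g. f \<in> hom C X Y \<longrightarrow> g \<in> hom C X Y \<longrightarrow>
        shM C (madd C f g) = madd C (shM C f) (shM C g)) \<and>
     bij (shO C) \<and>
     (\<forall>X Y. bij_betw (shM C) (hom C X Y) (hom C (shO C X) (shO C Y))) \<and>
     \<comment> \<open>triangles are typed\<close>
     (\<forall>X Y Z f g h. dtri C X Y Z f g h \<longrightarrow>
        f \<in> hom C X Y \<and> g \<in> hom C Y Z \<and> h \<in> hom C Z (shO C X)) \<and>
     \<comment> \<open>TR1: closure under isomorphism of triangles\<close>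
     (\<forall>X Y Z f g h X' Y' Z' f' g' h' a b c.
        dtri C X Y Z f g h \<longrightarrow>
        f' \<in> hom C X' Y' \<longrightarrow> g' \<in> hom C Y' Z' \<longrightarrow> h' \<in> hom C Z' (shO C X') \<longrightarrow>
        isomorphism C X X' a \<longrightarrow> isomorphism C Y Y' b \<longrightarrow> isomorphism C Z Z' c \<longrightarrow>
        cmp C b f = cmp C f' a \<longrightarrow> cmp C c g = cmp C g' b \<longrightarrow>
        cmp C (shM C a) h = cmp C h' c \<longrightarrow>
        dtri C X' Y' Z' f' g' h') \<and>
     \<comment> \<open>TR1: X --id--> X --> 0 --> X[1] is distinguished\<close>
     (\<forall>X Z. zero_obj C Z \<longrightarrow>
        dtri C X X Z (idm C X) (mzero C X Z) (mzero C Z (shO C X))) \<and>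
     \<comment> \<open>TR1: every morphism embeds in a distinguished triangle\<close>
     (\<forall>X Y f. f \<in> hom C X Y \<longrightarrow> (\<exists>Z g h. dtri C X Y Z f g h)) \<and>
     \<comment> \<open>TR2: rotation\<close>
     (\<forall>X Y Z f g h. f \<in> hom C X Y \<longrightarrow> g \<in> hom C Y Z \<longrightarrow> h \<in> hom C Z (shO C X) \<longrightarrow>
        (dtri C X Y Z f g h \<longleftrightarrow> dtri C Y Z (shO C X) g h (mneg C (shM C f)))) \<and>
     \<comment> \<open>TR3: completion of morphisms of triangles\<close>
     (\<forall>X Y Z f g h X' Y' Z' f' g' h' a b.
        dtri C X Y Z f g h \<longrightarrow> dtri C X' Y' Z' f' g' h' \<longrightarrow>
        a \<in> hom C X X' \<longrightarrow> b \<in> hom C Y Y' \<longrightarrow> cmp C b f = cmp C f' a \<longrightarrow>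
        (\<exists>c\<in>hom C Z Z'. cmp C c g = cmp C g' b \<and> cmp C h' c = cmp C (shM C a) h)) \<and>
     \<comment> \<open>TR4: octahedral axiom\<close>
     (\<forall>X Y Z f g Z' u u' X' v v' Y' w w'.
        f \<in> hom C X Y \<longrightarrow> g \<in> hom C Y Z \<longrightarrow>
        dtri C X Y Z' f u u' \<longrightarrow> dtri C Y Z X' g v v' \<longrightarrow>
        dtri C X Z Y' (cmp C g f) w w' \<longrightarrow>
        (\<exists>a\<in>hom C Z' Y'. \<exists>b\<in>hom C Y' X'.
           dtri C Z' Y' X' a b (cmp C (shM C u) v') \<and>
           cmp C a u = cmp C w g \<and> cmp C w' a = u' \<and>
           cmp C b w = v \<and> cmp C v' b = cmp C (shM C f) w'))"

text \<open>Full subcategories are given by their classes of objects.\<close>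

definition closed_subcat :: "('o, 'm) tricat \<Rightarrow> 'o set \<Rightarrow> bool" where
  "closed_subcat C A \<longleftrightarrow>
     (\<forall>X Y. X \<in> A \<longrightarrow> iso C X Y \<longrightarrow> Y \<in> A) \<and>
     (\<forall>Z. zero_obj C Z \<longrightarrow> Z \<in> A) \<and>
     (\<forall>X Y B. X \<in> A \<longrightarrow> Y \<in> A \<longrightarrow> is_biproduct C X Y B \<longrightarrow> B \<in> A) \<and>
     (\<forall>X Y B. B \<in> A \<longrightarrow> is_biproduct C X Y B \<longrightarrow> X \<in> A \<and> Y \<in> A)"

definition star :: "('o, 'm) tricat \<Rightarrow> 'o set \<Rightarrow> 'o set \<Rightarrow> 'o set" where
  "star C A B = {E. \<exists>X\<in>A. \<exists>Y\<in>B. \<exists>f g h. dtri C X E Y f g h}"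

definition shift_up :: "('o, 'm) tricat \<Rightarrow> 'o set \<Rightarrow> 'o set" where
  "shift_up C A = shO C ` A"

definition shift_down :: "('o, 'm) tricat \<Rightarrow> 'o set \<Rightarrow> 'o set" where
  "shift_down C A = {X. shO C X \<in> A}"

definition hom_vanish :: "('o, 'm) tricat \<Rightarrow> 'o set \<Rightarrow> 'o set \<Rightarrow> bool" where
  "hom_vanish C A B \<longleftrightarrow> (\<forall>X\<in>A. \<forall>Y\<in>B. \<forall>f\<in>hom C X Y. f = mzero C X Y)"

definition cotorsion_pair :: "('o, 'm) tricat \<Rightarrow> 'o set \<Rightarrow> 'o set \<Rightarrow> bool" where
  "cotorsion_pair C A B \<longleftrightarrow> closed_subcat C A \<and> closed_subcat C B \<and>
     star C A (shift_up C B) = UNIV \<and> hom_vanish C A (shift_up C B)"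

definition twin_cotorsion_pair ::
  "('o, 'm) tricat \<Rightarrow> 'o set \<Rightarrow> 'o set \<Rightarrow> 'o set \<Rightarrow> 'o set \<Rightarrow> bool" where
  "twin_cotorsion_pair C S T U V \<longleftrightarrow> cotorsion_pair C S T \<and> cotorsion_pair C U V \<and>
     hom_vanish C S (shift_up C V)"

definition Wcl :: "'o set \<Rightarrow> 'o set \<Rightarrow> 'o set \<Rightarrow> 'o set \<Rightarrow> 'o set" where
  "Wcl S T U V = U \<inter> T"

definition Cplus :: "('o, 'm) tricat \<Rightarrow> 'o set \<Rightarrow> 'o set \<Rightarrow> 'o set \<Rightarrow> 'o set \<Rightarrow> 'o set" where
  "Cplus C S T U V = star C (Wcl S T U V) (shift_up C V)"

definition Cminus :: "('o, 'm) tricat \<Rightarrow> 'o set \<Rightarrow> 'o set \<Rightarrow> 'o set \<Rightarrow> 'o set \<Rightarrow> 'o set" where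
  "Cminus C S T U V = star C (shift_down C S) (Wcl S T U V)"

definition factors_through :: "('o, 'm) tricat \<Rightarrow> 'o set \<Rightarrow> 'o \<Rightarrow> 'o \<Rightarrow> 'm \<Rightarrow> bool" where
  "factors_through C W X Y f \<longleftrightarrow>
     (\<exists>Z\<in>W. \<exists>g\<in>hom C X Z. \<exists>h\<in>hom C Z Y. f = cmp C h g)"

text \<open>equality of morphisms X to Y in C/W\<close>
definition eqW :: "('o, 'm) tricat \<Rightarrow> 'o set \<Rightarrow> 'o \<Rightarrow> 'o \<Rightarrow> 'm \<Rightarrow> 'm \<Rightarrow> bool" where
  "eqW C W X Y f g \<longleftrightarrow> factors_through C W X Y (madd C f (mneg C g))"

definition isoW :: "('o, 'm) tricat \<Rightarrow> 'o set \<Rightarrow> 'o \<Rightarrow> 'o \<Rightarrow> bool" where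
  "isoW C W X Y \<longleftrightarrow> (\<exists>f\<in>hom C X Y. \<exists>g\<in>hom C Y X.
     eqW C W X X (cmp C g f) (idm C X) \<and> eqW C W Y Y (cmp C f g) (idm C Y))"

text \<open>(R, eta) is a reflection of X into D/W inside C/W, i.e. the unit at X of a
left adjoint to the inclusion D/W into C/W: R = tau^+(X) when D = C^+.\<close>
definition reflection ::
  "('o, 'm) tricat \<Rightarrow> 'o set \<Rightarrow> 'o set \<Rightarrow> 'o \<Rightarrow> 'o \<Rightarrow> 'm \<Rightarrow> bool" where
  "reflection C W D X R eta \<longleftrightarrow> R \<in> D \<and> eta \<in> hom C X R \<and>
     (\<forall>R'\<in>D. (\<forall>\<phi>\<in>hom C X R'. \<exists>\<psi>\<in>hom C R R'. eqW C W X R' (cmp C \<psi> eta) \<phi>) \<and>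
        (\<forall>\<psi>1\<in>hom C R R'. \<forall>\<psi>2\<in>hom C R R'.
           eqW C W X R' (cmp C \<psi>1 eta) (cmp C \<psi>2 eta) \<longrightarrow> eqW C W R R' \<psi>1 \<psi>2))"

text \<open>(L, eps) is a coreflection of X into D/W inside C/W, i.e. the counit at X of a
right adjoint to the inclusion: L = tau^-(X) when D = C^-.\<close>
definition coreflection ::
  "('o, 'm) tricat \<Rightarrow> 'o set \<Rightarrow> 'o set \<Rightarrow> 'o \<Rightarrow> 'o \<Rightarrow> 'm \<Rightarrow> bool" where
  "coreflection C W D X L eps \<longleftrightarrow> L \<in> D \<and> eps \<in> hom C L X \<and>
     (\<forall>L'\<in>D. (\<forall>\<phi>\<in>hom C L' X. \<exists>\<psi>\<in>hom C L' L. eqW C W L' X (cmp C eps \<psi>) \<phi>) \<and>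
        (\<forall>\<psi>1\<in>hom C L' L. \<forall>\<psi>2\<in>hom C L' L.
           eqW C W L' X (cmp C eps \<psi>1) (cmp C eps \<psi>2) \<longrightarrow> eqW C W L' L \<psi>1 \<psi>2))"

end

theory Submission
  imports Defs
begin

text \<open>
  The two cotorsion pairs give triangles \<open>U\<^sub>0 \<rightarrow> X \<rightarrow> V\<^sub>0[1]\<close> (second map \<open>e\<close>) and
  \<open>X\<^sub>0 \<rightarrow> X \<rightarrow> T\<^sub>0\<close> (first map \<open>a\<close>) with \<open>U\<^sub>0 \<in> U\<close>, \<open>V\<^sub>0 \<in> V\<close>,
  \<open>X\<^sub>0[1] \<in> S\<close> and \<open>T\<^sub>0 \<in> T\<close>.  Since \<open>Hom(W, V[1]) = 0 = Hom(S[-1], W)\<close>, the classes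
  \<open>U = {Y. Hom(Y, V[1]) = 0}\<close> and \<open>T = {Y. Hom(S[-1], Y) = 0}\<close> are closed under retracts
  in \<open>C/W\<close>, so conditions (2) and (3) say \<open>\<tau>\<^sup>-X \<in> U\<close> and \<open>\<tau>\<^sup>+X \<in> T\<close>.  Both are
  equivalent to \<open>e \<circ> a = 0\<close>: when it holds, the counit \<open>\<tau>\<^sup>-X \<rightarrow> X\<close> factors through
  \<open>U\<^sub>0 \<rightarrow> X\<close> and the unit \<open>X \<rightarrow> \<tau>\<^sup>+X\<close> through \<open>X \<rightarrow> T\<^sub>0\<close>, and a (co)reflection is a
  retract in \<open>C/W\<close> of every object of \<open>C\<^sup>\<plusminus>\<close> through which its (co)unit factors.
  The same retract argument, applied to the \<open>W\<close>-term of a triangle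
  \<open>W\<^sub>1 \<rightarrow> \<tau>\<^sup>+\<tau>\<^sup>-X \<rightarrow> V\<^sub>1[1]\<close>, shows that the identity of \<open>H(X)\<close> factors through
  \<open>W\<close> exactly when \<open>\<tau>\<^sup>-X \<in> U\<close>.
\<close>

lemma closed_subcat_Int: "closed_subcat C A \<Longrightarrow> closed_subcat C B \<Longrightarrow> closed_subcat C (A \<inter> B)"
  unfolding closed_subcat_def by blast

lemma closed_subcat_zero_obj: "closed_subcat C K \<Longrightarrow> zero_obj C Z \<Longrightarrow> Z \<in> K"
  unfolding closed_subcat_def by blast

lemma star_memI: "X \<in> A \<Longrightarrow> Y \<in> B \<Longrightarrow> dtri C X E Y f g h \<Longrightarrow> E \<in> star C A B"
  unfolding star_def by blast

locale preadditive_cat =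
  fixes C :: "('o, 'm) tricat"
  assumes preadditive: "preadditive C"
begin

lemma hom_id [simp]: "idm C X \<in> hom C X X"
  and hom_comp [intro]: "f \<in> hom C X Y \<Longrightarrow> g \<in> hom C Y Z \<Longrightarrow> cmp C g f \<in> hom C X Z"
  and comp_assoc: "f \<in> hom C X Y \<Longrightarrow> g \<in> hom C Y Z \<Longrightarrow> h \<in> hom C Z W \<Longrightarrow>
     cmp C h (cmp C g f) = cmp C (cmp C h g) f"
  and comp_id_right [simp]: "f \<in> hom C X Y \<Longrightarrow> cmp C f (idm C X) = f"
  and comp_id_left [simp]: "f \<in> hom C X Y \<Longrightarrow> cmp C (idm C Y) f = f"
  using preadditive unfolding preadditive_def category_def by simp_all

lemma hom_zero [simp]: "mzero C X Y \<in> hom C X Y"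
  and hom_add [intro, simp]: "f \<in> hom C X Y \<Longrightarrow> g \<in> hom C X Y \<Longrightarrow> madd C f g \<in> hom C X Y"
  and hom_neg [intro, simp]: "f \<in> hom C X Y \<Longrightarrow> mneg C f \<in> hom C X Y"
  and add_assoc: "f \<in> hom C X Y \<Longrightarrow> g \<in> hom C X Y \<Longrightarrow> h \<in> hom C X Y \<Longrightarrow>
     madd C (madd C f g) h = madd C f (madd C g h)"
  and add_commute: "f \<in> hom C X Y \<Longrightarrow> g \<in> hom C X Y \<Longrightarrow> madd C f g = madd C g f"
  and add_zero_left [simp]: "f \<in> hom C X Y \<Longrightarrow> madd C (mzero C X Y) f = f"
  and add_neg_left [simp]: "f \<in> hom C X Y \<Longrightarrow> madd C (mneg C f) f = mzero C X Y"
  and comp_distrib_left: "f1 \<in> hom C X Y \<Longrightarrow> f2 \<in> hom C X Y \<Longrightarrow> g \<in> hom C Y Z \<Longrightarrow>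
     cmp C g (madd C f1 f2) = madd C (cmp C g f1) (cmp C g f2)"
  and comp_distrib_right: "f \<in> hom C X Y \<Longrightarrow> g1 \<in> hom C Y Z \<Longrightarrow> g2 \<in> hom C Y Z \<Longrightarrow>
     cmp C (madd C g1 g2) f = madd C (cmp C g1 f) (cmp C g2 f)"
  using preadditive unfolding preadditive_def by simp_all

lemma add_zero_right [simp]: "f \<in> hom C X Y \<Longrightarrow> madd C f (mzero C X Y) = f"
  by (metis add_zero_left add_commute hom_zero)

lemma add_neg_right [simp]: "f \<in> hom C X Y \<Longrightarrow> madd C f (mneg C f) = mzero C X Y"
  by (metis add_neg_left add_commute hom_neg)

lemma add_left_cancel:
  assumes "a \<in> hom C X Y" "b \<in> hom C X Y" "c \<in> hom C X Y" "madd C a b = madd C a c"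
  shows "b = c"
proof -
  have "b = madd C (madd C (mneg C a) a) b" using assms by simp
  also have "\<dots> = madd C (mneg C a) (madd C a b)" using assms by (intro add_assoc) auto
  also have "\<dots> = madd C (mneg C a) (madd C a c)" using assms by simp
  also have "\<dots> = madd C (madd C (mneg C a) a) c" using assms by (intro add_assoc[symmetric]) auto
  finally show ?thesis using assms by simp
qed

lemma neg_unique:
  assumes "a \<in> hom C X Y" "b \<in> hom C X Y" "madd C a b = mzero C X Y"
  shows "b = mneg C a"
  using add_left_cancel[of a X Y b "mneg C a"] assms by simp

lemma neg_neg [simp]: "f \<in> hom C X Y \<Longrightarrow> mneg C (mneg C f) = f"
  using neg_unique[of "mneg C f" X Y f] by simp

lemma neg_zero [simp]: "mneg C (mzero C X Y) = mzero C X Y"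
  by (metis add_zero_left neg_unique hom_zero)

lemma neg_eq_zero_iff: "f \<in> hom C X Y \<Longrightarrow> mneg C f = mzero C X Y \<longleftrightarrow> f = mzero C X Y"
  by (metis neg_neg neg_zero)

lemma eq_of_diff_eq_zero:
  assumes "a \<in> hom C X Y" "b \<in> hom C X Y" "madd C a (mneg C b) = mzero C X Y"
  shows "a = b"
  by (metis assms hom_neg neg_neg neg_unique)

lemma comp_zero_left [simp]:
  assumes "f \<in> hom C X Y" shows "cmp C (mzero C Y Z) f = mzero C X Z"
proof -
  have m: "cmp C (mzero C Y Z) f \<in> hom C X Z" using hom_comp[OF assms hom_zero] .
  have "madd C (cmp C (mzero C Y Z) f) (cmp C (mzero C Y Z) f)
      = madd C (cmp C (mzero C Y Z) f) (mzero C X Z)"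
    using comp_distrib_right[OF assms hom_zero hom_zero, of Z] m by simp
  then show ?thesis using add_left_cancel[OF m m hom_zero] by simp
qed

lemma comp_zero_right [simp]:
  assumes "g \<in> hom C Y Z" shows "cmp C g (mzero C X Y) = mzero C X Z"
proof -
  have m: "cmp C g (mzero C X Y) \<in> hom C X Z" using hom_comp[OF hom_zero assms] .
  have "madd C (cmp C g (mzero C X Y)) (cmp C g (mzero C X Y))
      = madd C (cmp C g (mzero C X Y)) (mzero C X Z)"
    using comp_distrib_left[OF hom_zero hom_zero assms, of X] m by simp
  then show ?thesis using add_left_cancel[OF m m hom_zero] by simp
qed

lemma comp_zero_zero [simp]: "cmp C (mzero C Y Z) (mzero C X Y) = mzero C X Z"
  by simp

lemma comp_neg_right:
  assumes "f \<in> hom C X Y" "g \<in> hom C Y Z" shows "cmp C g (mneg C f) = mneg C (cmp C g f)"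
proof -
  have "madd C (cmp C g f) (cmp C g (mneg C f)) = mzero C X Z"
    using comp_distrib_left[OF assms(1) hom_neg[OF assms(1)] assms(2)] assms by simp
  then show ?thesis using assms neg_unique by blast
qed

lemma comp_neg_left:
  assumes "f \<in> hom C X Y" "g \<in> hom C Y Z" shows "cmp C (mneg C g) f = mneg C (cmp C g f)"
proof -
  have "madd C (cmp C g f) (cmp C (mneg C g) f) = mzero C X Z"
    using comp_distrib_right[OF assms(1) assms(2) hom_neg[OF assms(2)]] assms by simp
  then show ?thesis using assms neg_unique by blast
qed

lemma zero_obj_hom_to: "zero_obj C Z \<Longrightarrow> f \<in> hom C X Z \<Longrightarrow> f = mzero C X Z"
  unfolding zero_obj_def by (metis comp_id_left comp_zero_left)

lemma factors_throughI:
  "Z \<in> W \<Longrightarrow> g \<in> hom C X Z \<Longrightarrow> h \<in> hom C Z Y \<Longrightarrow> factors_through C W X Y (cmp C h g)"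
  unfolding factors_through_def by blast

lemma factors_through_comp_left:
  assumes "factors_through C W X Y f" "k \<in> hom C Y Y'"
  shows "factors_through C W X Y' (cmp C k f)"
proof -
  obtain Z g h where "Z \<in> W" "g \<in> hom C X Z" "h \<in> hom C Z Y" "f = cmp C h g"
    using assms(1) unfolding factors_through_def by blast
  then show ?thesis using factors_throughI[of Z W g X "cmp C k h"] comp_assoc assms(2) by auto
qed

lemma factors_through_comp_right:
  assumes "factors_through C W X Y f" "k \<in> hom C X' X"
  shows "factors_through C W X' Y (cmp C f k)"
proof -
  obtain Z g h where "Z \<in> W" "g \<in> hom C X Z" "h \<in> hom C Z Y" "f = cmp C h g"
    using assms(1) unfolding factors_through_def by blast
  then show ?thesis using factors_throughI[of Z W "cmp C g k" X' h] comp_assoc assms(2) by auto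
qed

lemma factors_through_neg:
  assumes "factors_through C W X Y f" shows "factors_through C W X Y (mneg C f)"
proof -
  obtain Z g h where "Z \<in> W" "g \<in> hom C X Z" "h \<in> hom C Z Y" "f = cmp C h g"
    using assms unfolding factors_through_def by blast
  then show ?thesis using factors_throughI[of Z W g X "mneg C h"] comp_neg_left by auto
qed

lemma factors_through_vanish_target:
  assumes "hom_vanish C W {Y}" "factors_through C W X Y f" shows "f = mzero C X Y"
proof -
  obtain Z g h where "Z \<in> W" "g \<in> hom C X Z" "h \<in> hom C Z Y" "f = cmp C h g"
    using assms(2) unfolding factors_through_def by blast
  moreover from calculation have "h = mzero C Z Y" using assms(1) unfolding hom_vanish_def by blast
  ultimately show ?thesis by simp
qed

lemma factors_through_vanish_source:
  assumes "hom_vanish C {X} W" "factors_through C W X Y f" shows "f = mzero C X Y"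
proof -
  obtain Z g h where "Z \<in> W" "g \<in> hom C X Z" "h \<in> hom C Z Y" "f = cmp C h g"
    using assms(2) unfolding factors_through_def by blast
  moreover from calculation have "g = mzero C X Z" using assms(1) unfolding hom_vanish_def by blast
  ultimately show ?thesis by simp
qed

lemma eqW_comp_left:
  assumes "eqW C W X Y f g" "f \<in> hom C X Y" "g \<in> hom C X Y" "k \<in> hom C Y Y'"
  shows "eqW C W X Y' (cmp C k f) (cmp C k g)"
proof -
  have "cmp C k (madd C f (mneg C g)) = madd C (cmp C k f) (mneg C (cmp C k g))"
    using comp_distrib_left[OF assms(2) hom_neg[OF assms(3)] assms(4)] comp_neg_right[OF assms(3,4)]
    by simp
  then show ?thesis
    using factors_through_comp_left[OF _ assms(4)] assms(1) unfolding eqW_def by metis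
qed

lemma eqW_comp_right:
  assumes "eqW C W X Y f g" "f \<in> hom C X Y" "g \<in> hom C X Y" "k \<in> hom C X' X"
  shows "eqW C W X' Y (cmp C f k) (cmp C g k)"
proof -
  have "cmp C (madd C f (mneg C g)) k = madd C (cmp C f k) (mneg C (cmp C g k))"
    using comp_distrib_right[OF assms(4,2) hom_neg[OF assms(3)]] comp_neg_left[OF assms(4,3)]
    by simp
  then show ?thesis
    using factors_through_comp_right[OF _ assms(4)] assms(1) unfolding eqW_def by metis
qed

lemma eqW_imp_eq_vanish_target:
  "hom_vanish C W {Y} \<Longrightarrow> eqW C W X Y f g \<Longrightarrow> f \<in> hom C X Y \<Longrightarrow> g \<in> hom C X Y \<Longrightarrow> f = g"
  unfolding eqW_def using factors_through_vanish_target eq_of_diff_eq_zero by blast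

lemma eqW_imp_eq_vanish_source:
  "hom_vanish C {X} W \<Longrightarrow> eqW C W X Y f g \<Longrightarrow> f \<in> hom C X Y \<Longrightarrow> g \<in> hom C X Y \<Longrightarrow> f = g"
  unfolding eqW_def using factors_through_vanish_source eq_of_diff_eq_zero by blast

lemma eqW_retract_vanish_target:
  assumes "f \<in> hom C L Y" "g \<in> hom C Y L" "eqW C W L L (cmp C g f) (idm C L)"
    and "hom_vanish C W {N}" "\<phi> \<in> hom C L N" "cmp C \<phi> g = mzero C Y N"
  shows "\<phi> = mzero C L N"
proof -
  have "eqW C W L N (cmp C \<phi> (cmp C g f)) (cmp C \<phi> (idm C L))"
    using eqW_comp_left[OF assms(3) _ hom_id assms(5)] assms(1,2) by blast
  moreover have "cmp C \<phi> (cmp C g f) = mzero C L N"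
    using comp_assoc[OF assms(1,2,5)] assms(1,6) by simp
  ultimately show ?thesis using eqW_imp_eq_vanish_target[OF assms(4)] assms(5) by fastforce
qed

lemma eqW_retract_vanish_source:
  assumes "f \<in> hom C R Y" "g \<in> hom C Y R" "eqW C W R R (cmp C g f) (idm C R)"
    and "hom_vanish C {N} W" "k \<in> hom C N R" "cmp C f k = mzero C N Y"
  shows "k = mzero C N R"
proof -
  have "eqW C W N R (cmp C (cmp C g f) k) (cmp C (idm C R) k)"
    using eqW_comp_right[OF assms(3) _ hom_id assms(5)] assms(1,2) by blast
  moreover have "cmp C (cmp C g f) k = mzero C N R"
    using comp_assoc[OF assms(5,1,2)] assms(2,6) by simp
  ultimately show ?thesis using eqW_imp_eq_vanish_source[OF assms(4)] assms(5) by fastforce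
qed

lemma reflection_retract:
  assumes refl: "reflection C W D X R eta" and "Y \<in> D"
    and b: "b \<in> hom C X Y" and l: "l \<in> hom C Y R" and eta: "eta = cmp C l b"
  shows "\<exists>\<mu>\<in>hom C R Y. eqW C W R R (cmp C l \<mu>) (idm C R)"
proof -
  have R: "R \<in> D" and eta_hom: "eta \<in> hom C X R" using refl unfolding reflection_def by blast+
  obtain \<mu> where \<mu>: "\<mu> \<in> hom C R Y" "eqW C W X Y (cmp C \<mu> eta) b"
    using refl \<open>Y \<in> D\<close> b unfolding reflection_def by blast
  have "eqW C W X R (cmp C l (cmp C \<mu> eta)) (cmp C l b)"
    using eqW_comp_left[OF \<mu>(2) _ b l] \<mu>(1) eta_hom by blast
  then have "eqW C W X R (cmp C (cmp C l \<mu>) eta) (cmp C (idm C R) eta)"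
    using comp_assoc[OF eta_hom \<mu>(1) l] eta eta_hom by simp
  then have "eqW C W R R (cmp C l \<mu>) (idm C R)"
    using refl R hom_comp[OF \<mu>(1) l] hom_id unfolding reflection_def by blast
  then show ?thesis using \<mu>(1) by blast
qed

lemma coreflection_retract:
  assumes corefl: "coreflection C W D X L eps" and "Y \<in> D"
    and c: "c \<in> hom C Y X" and l: "l \<in> hom C L Y" and eps: "eps = cmp C c l"
  shows "\<exists>\<mu>\<in>hom C Y L. eqW C W L L (cmp C \<mu> l) (idm C L)"
proof -
  have L: "L \<in> D" and eps_hom: "eps \<in> hom C L X" using corefl unfolding coreflection_def by blast+
  obtain \<mu> where \<mu>: "\<mu> \<in> hom C Y L" "eqW C W Y X (cmp C eps \<mu>) c"
    using corefl \<open>Y \<in> D\<close> c unfolding coreflection_def by blast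
  have "eqW C W L X (cmp C (cmp C eps \<mu>) l) (cmp C c l)"
    using eqW_comp_right[OF \<mu>(2) _ c l] \<mu>(1) eps_hom by blast
  then have "eqW C W L X (cmp C eps (cmp C \<mu> l)) (cmp C eps (idm C L))"
    using comp_assoc[OF l \<mu>(1) eps_hom] eps eps_hom by simp
  then have "eqW C W L L (cmp C \<mu> l) (idm C L)"
    using corefl L hom_comp[OF l \<mu>(1)] hom_id unfolding coreflection_def by blast
  then show ?thesis using \<mu>(1) by blast
qed

lemma reflection_extend:
  assumes refl: "reflection C W D X R eta" and "N \<in> D" "hom_vanish C W {N}" "e \<in> hom C X N"
  shows "\<exists>\<psi>\<in>hom C R N. cmp C \<psi> eta = e"
proof -
  have "eta \<in> hom C X R" using refl unfolding reflection_def by blast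
  moreover obtain \<psi> where "\<psi> \<in> hom C R N" "eqW C W X N (cmp C \<psi> eta) e"
    using refl assms(2,4) unfolding reflection_def by blast
  ultimately show ?thesis using eqW_imp_eq_vanish_target[OF assms(3)] assms(4) by blast
qed

lemma coreflection_lift:
  assumes corefl: "coreflection C W D X L eps" and "Y \<in> D" "hom_vanish C {Y} W" "a \<in> hom C Y X"
  shows "\<exists>\<alpha>\<in>hom C Y L. cmp C eps \<alpha> = a"
proof -
  have "eps \<in> hom C L X" using corefl unfolding coreflection_def by blast
  moreover obtain \<alpha> where "\<alpha> \<in> hom C Y L" "eqW C W Y X (cmp C eps \<alpha>) a"
    using corefl assms(2,4) unfolding coreflection_def by blast
  ultimately show ?thesis using eqW_imp_eq_vanish_source[OF assms(3)] assms(4) by blast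
qed

end

locale additive_cat =
  fixes C :: "('o, 'm) tricat"
  assumes additive: "additive C"

sublocale additive_cat \<subseteq> preadditive_cat
  using additive by unfold_locales (simp add: additive_def)

context additive_cat
begin

lemma zero_obj_exists: "\<exists>Z. zero_obj C Z"
  using additive unfolding additive_def by blast

lemma biproduct_exists: "\<exists>B. is_biproduct C X Y B"
  using additive unfolding additive_def by blast

lemma factors_through_zero:
  assumes "closed_subcat C W" shows "factors_through C W X Y (mzero C X Y)"
proof -
  obtain Z where "zero_obj C Z" using zero_obj_exists by blast
  then show ?thesis
    using factors_throughI[OF closed_subcat_zero_obj[OF assms] hom_zero hom_zero] by fastforce
qed

lemma factors_through_add:
  assumes W: "closed_subcat C W"
    and f1: "factors_through C W X Y f1" and f2: "factors_through C W X Y f2"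
  shows "factors_through C W X Y (madd C f1 f2)"
proof -
  obtain Z1 g1 h1 where z1: "Z1 \<in> W" "g1 \<in> hom C X Z1" "h1 \<in> hom C Z1 Y" "f1 = cmp C h1 g1"
    using f1 unfolding factors_through_def by blast
  obtain Z2 g2 h2 where z2: "Z2 \<in> W" "g2 \<in> hom C X Z2" "h2 \<in> hom C Z2 Y" "f2 = cmp C h2 g2"
    using f2 unfolding factors_through_def by blast
  obtain B where bp: "is_biproduct C Z1 Z2 B" using biproduct_exists by blast
  then obtain i1 i2 p1 p2 where i:
    "i1 \<in> hom C Z1 B" "i2 \<in> hom C Z2 B" "p1 \<in> hom C B Z1" "p2 \<in> hom C B Z2"
    "cmp C p1 i1 = idm C Z1" "cmp C p2 i2 = idm C Z2"
    "cmp C p2 i1 = mzero C Z1 Z2" "cmp C p1 i2 = mzero C Z2 Z1"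
    unfolding is_biproduct_def by blast
  have BW: "B \<in> W" using bp z1(1) z2(1) W unfolding closed_subcat_def by blast
  define G where "G = madd C (cmp C i1 g1) (cmp C i2 g2)"
  define H where "H = madd C (cmp C h1 p1) (cmp C h2 p2)"
  have a1: "cmp C i1 g1 \<in> hom C X B" and a2: "cmp C i2 g2 \<in> hom C X B" using i z1 z2 by auto
  have b1: "cmp C h1 p1 \<in> hom C B Y" and b2: "cmp C h2 p2 \<in> hom C B Y" using i z1 z2 by auto
  have G: "G \<in> hom C X B" and H: "H \<in> hom C B Y" unfolding G_def H_def using a1 a2 b1 b2 by auto
  have "cmp C H i1 = madd C (cmp C h1 (cmp C p1 i1)) (cmp C h2 (cmp C p2 i1))"
    unfolding H_def using comp_distrib_right[OF i(1) b1 b2]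
      comp_assoc[OF i(1) i(3) z1(3)] comp_assoc[OF i(1) i(4) z2(3)] by simp
  then have Hi1: "cmp C H i1 = h1" using i z1 z2 by simp
  have "cmp C H i2 = madd C (cmp C h1 (cmp C p1 i2)) (cmp C h2 (cmp C p2 i2))"
    unfolding H_def using comp_distrib_right[OF i(2) b1 b2]
      comp_assoc[OF i(2) i(3) z1(3)] comp_assoc[OF i(2) i(4) z2(3)] by simp
  then have Hi2: "cmp C H i2 = h2" using i z1 z2 by simp
  have "cmp C H G = madd C (cmp C (cmp C H i1) g1) (cmp C (cmp C H i2) g2)"
    unfolding G_def using comp_distrib_left[OF a1 a2 H]
      comp_assoc[OF z1(2) i(1) H] comp_assoc[OF z2(2) i(2) H] by simp
  then have "cmp C H G = madd C f1 f2" using Hi1 Hi2 z1 z2 by simp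
  then show ?thesis using factors_throughI[OF BW G H] by simp
qed

lemma factors_through_eqW:
  assumes W: "closed_subcat C W" and fg: "eqW C W X Y f g" and f: "factors_through C W X Y f"
    and hom: "f \<in> hom C X Y" "g \<in> hom C X Y"
  shows "factors_through C W X Y g"
proof -
  have "factors_through C W X Y (madd C (mneg C f) (madd C f (mneg C g)))"
    using factors_through_add[OF W factors_through_neg[OF f]] fg unfolding eqW_def by blast
  moreover have "madd C (mneg C f) (madd C f (mneg C g)) = mneg C g"
    using add_assoc[of "mneg C f" X Y f "mneg C g", symmetric] hom by simp
  ultimately show ?thesis using factors_through_neg hom(2) by fastforce
qed

lemma eqW_refl: "closed_subcat C W \<Longrightarrow> f \<in> hom C X Y \<Longrightarrow> eqW C W X Y f f"
  unfolding eqW_def using factors_through_zero by simp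

lemma isoW_refl: "closed_subcat C W \<Longrightarrow> isoW C W X X"
  unfolding isoW_def using eqW_refl[OF _ hom_id] hom_id comp_id_left by metis

lemma isoW_zero_obj_iff:
  assumes W: "closed_subcat C W" and Z: "zero_obj C Z"
  shows "isoW C W R Z \<longleftrightarrow> factors_through C W R R (idm C R)"
proof
  assume "isoW C W R Z"
  then obtain f g where "f \<in> hom C R Z" "g \<in> hom C Z R" "eqW C W R R (cmp C g f) (idm C R)"
    unfolding isoW_def by blast
  moreover from calculation have "f = mzero C R Z" using zero_obj_hom_to[OF Z] by blast
  ultimately have "factors_through C W R R (mneg C (idm C R))" unfolding eqW_def by simp
  then show "factors_through C W R R (idm C R)"
    using factors_through_neg neg_neg[OF hom_id] by metis
next
  assume "factors_through C W R R (idm C R)"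
  then have "eqW C W R R (cmp C (mzero C Z R) (mzero C R Z)) (idm C R)"
    unfolding eqW_def using factors_through_neg by simp
  moreover have "eqW C W Z Z (cmp C (mzero C R Z) (mzero C Z R)) (idm C Z)"
    using eqW_refl[OF W hom_id, of Z] Z unfolding zero_obj_def by simp
  ultimately show "isoW C W R Z" unfolding isoW_def using hom_zero by blast
qed

end

locale triangulated_cat =
  fixes C :: "('o, 'm) tricat"
  assumes triangulated: "triangulated C"

sublocale triangulated_cat \<subseteq> additive_cat
  using triangulated by unfold_locales (simp add: triangulated_def)

context triangulated_cat
begin

lemma shift_hom [simp, intro]: "f \<in> hom C X Y \<Longrightarrow> shM C f \<in> hom C (shO C X) (shO C Y)"
  using triangulated unfolding triangulated_def by (elim conjE) meson

lemma shift_id [simp]: "shM C (idm C X) = idm C (shO C X)"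
  using triangulated unfolding triangulated_def by (elim conjE) meson

lemma shift_comp: "f \<in> hom C X Y \<Longrightarrow> g \<in> hom C Y Z \<Longrightarrow>
     shM C (cmp C g f) = cmp C (shM C g) (shM C f)"
  using triangulated unfolding triangulated_def by (elim conjE) meson

lemma shift_add: "f \<in> hom C X Y \<Longrightarrow> g \<in> hom C X Y \<Longrightarrow>
     shM C (madd C f g) = madd C (shM C f) (shM C g)"
  using triangulated unfolding triangulated_def by (elim conjE) meson

lemma shift_obj_bij: "bij (shO C)"
  using triangulated unfolding triangulated_def by (elim conjE) meson

lemma shift_hom_bij: "bij_betw (shM C) (hom C X Y) (hom C (shO C X) (shO C Y))"
  using triangulated unfolding triangulated_def by (elim conjE) meson

lemma triangle_hom: "dtri C X Y Z f g h \<Longrightarrow>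
     f \<in> hom C X Y \<and> g \<in> hom C Y Z \<and> h \<in> hom C Z (shO C X)"
  using triangulated unfolding triangulated_def by (elim conjE) meson

lemma triangle_id: "zero_obj C Z \<Longrightarrow>
     dtri C X X Z (idm C X) (mzero C X Z) (mzero C Z (shO C X))"
  using triangulated unfolding triangulated_def by (elim conjE) meson

lemma triangle_exists: "f \<in> hom C X Y \<Longrightarrow> \<exists>Z g h. dtri C X Y Z f g h"
  using triangulated unfolding triangulated_def by (elim conjE) meson

lemma triangle_rotate_iff: "f \<in> hom C X Y \<Longrightarrow> g \<in> hom C Y Z \<Longrightarrow> h \<in> hom C Z (shO C X) \<Longrightarrow>
     dtri C X Y Z f g h \<longleftrightarrow> dtri C Y Z (shO C X) g h (mneg C (shM C f))"
  using triangulated unfolding triangulated_def by (elim conjE) meson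

lemma triangle_morphism_exists: "dtri C X Y Z f g h \<Longrightarrow> dtri C X' Y' Z' f' g' h' \<Longrightarrow>
     a \<in> hom C X X' \<Longrightarrow> b \<in> hom C Y Y' \<Longrightarrow> cmp C b f = cmp C f' a \<Longrightarrow>
     \<exists>c\<in>hom C Z Z'. cmp C c g = cmp C g' b \<and> cmp C h' c = cmp C (shM C a) h"
  using triangulated unfolding triangulated_def by (elim conjE) meson

lemma shift_inj: "f \<in> hom C X Y \<Longrightarrow> g \<in> hom C X Y \<Longrightarrow> shM C f = shM C g \<Longrightarrow> f = g"
  using shift_hom_bij unfolding bij_betw_def inj_on_def by blast

lemma shift_surj: "g \<in> hom C (shO C X) (shO C Y) \<Longrightarrow> \<exists>f\<in>hom C X Y. shM C f = g"
  using shift_hom_bij[of X Y] unfolding bij_betw_def by (metis imageE)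

lemma shift_obj_surj: "\<exists>X. shO C X = Y"
  using shift_obj_bij unfolding bij_def surj_def by metis

lemma shift_zero [simp]: "shM C (mzero C X Y) = mzero C (shO C X) (shO C Y)"
proof -
  have "madd C (shM C (mzero C X Y)) (shM C (mzero C X Y))
      = madd C (shM C (mzero C X Y)) (mzero C (shO C X) (shO C Y))"
    using shift_add[OF hom_zero hom_zero, of X Y] by simp
  then show ?thesis using add_left_cancel shift_hom[OF hom_zero] hom_zero by blast
qed

lemma zero_obj_shift: "zero_obj C Z \<Longrightarrow> zero_obj C (shO C Z)"
  unfolding zero_obj_def by (metis shift_id shift_zero)

lemma triangle_rotate: "dtri C X Y Z f g h \<Longrightarrow> dtri C Y Z (shO C X) g h (mneg C (shM C f))"
  using triangle_rotate_iff triangle_hom by blast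

lemma triangle_rotate_back:
  assumes "dtri C Y Z (shO C X) g h k"
  shows "\<exists>f\<in>hom C X Y. dtri C X Y Z f g h"
proof -
  have g: "g \<in> hom C Y Z" and h: "h \<in> hom C Z (shO C X)" and k: "k \<in> hom C (shO C X) (shO C Y)"
    using triangle_hom[OF assms] by auto
  obtain f where f: "f \<in> hom C X Y" "shM C f = mneg C k" using shift_surj[OF hom_neg[OF k]] by blast
  then have "dtri C X Y Z f g h" using triangle_rotate_iff[OF f(1) g h] assms k by simp
  then show ?thesis using f by blast
qed

lemma triangle_zero_left:
  assumes "zero_obj C Z" shows "dtri C Z Y Y (mzero C Z Y) (idm C Y) (mzero C Y (shO C Z))"
  using triangle_id[OF zero_obj_shift[OF assms], of Y]
    triangle_rotate_iff[of "mzero C Z Y" Z Y "idm C Y" Y "mzero C Y (shO C Z)"] by simp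

lemma triangle_comp_zero:
  assumes "dtri C X Y Z f g h" shows "cmp C g f = mzero C X Z"
proof -
  obtain Z0 where z: "zero_obj C Z0" using zero_obj_exists by blast
  have f: "f \<in> hom C X Y" using triangle_hom[OF assms] by blast
  obtain c where "c \<in> hom C Z0 Z" "cmp C c (mzero C X Z0) = cmp C g (cmp C (idm C Y) f)"
    using triangle_morphism_exists[OF triangle_id[OF z, of X] assms hom_id f] f by auto
  then show ?thesis using f by simp
qed

lemma triangle_weak_cokernel:
  assumes "dtri C X Y Z f g h" "\<phi> \<in> hom C Y N" "cmp C \<phi> f = mzero C X N"
  shows "\<exists>\<psi>\<in>hom C Z N. \<phi> = cmp C \<psi> g"
proof -
  obtain Z0 where z: "zero_obj C Z0" using zero_obj_exists by blast
  have "cmp C \<phi> f = cmp C (mzero C Z0 N) (mzero C X Z0)" using assms(3) by simp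
  then obtain c where "c \<in> hom C Z N" "cmp C c g = cmp C (idm C N) \<phi>"
    using triangle_morphism_exists[OF assms(1) triangle_zero_left[OF z] hom_zero assms(2)] by blast
  then show ?thesis using assms(2) by auto
qed

lemma triangle_weak_kernel:
  assumes "dtri C X Y Z f g h" "\<phi> \<in> hom C N Y" "cmp C g \<phi> = mzero C N Z"
  shows "\<exists>\<psi>\<in>hom C N X. \<phi> = cmp C f \<psi>"
proof -
  obtain Z0 where z: "zero_obj C Z0" using zero_obj_exists by blast
  have f: "f \<in> hom C X Y" using triangle_hom[OF assms(1)] by blast
  have "cmp C (mzero C Z0 Z) (mzero C N Z0) = cmp C g \<phi>" using assms(3) by simp
  then obtain c where c: "c \<in> hom C (shO C N) (shO C X)"
    "cmp C (mneg C (shM C f)) c = cmp C (shM C \<phi>) (mneg C (idm C (shO C N)))"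
    using triangle_morphism_exists[OF triangle_rotate[OF triangle_id[OF z, of N]]
        triangle_rotate[OF assms(1)] assms(2) hom_zero] by auto
  then have "mneg C (cmp C (shM C f) c) = mneg C (shM C \<phi>)"
    using comp_neg_left[OF c(1) shift_hom[OF f]] comp_neg_right[OF hom_id shift_hom[OF assms(2)]]
      shift_hom[OF assms(2)] by simp
  then have "cmp C (shM C f) c = shM C \<phi>"
    by (metis neg_neg hom_comp c(1) shift_hom f assms(2))
  moreover obtain \<psi> where \<psi>: "\<psi> \<in> hom C N X" "shM C \<psi> = c" using shift_surj[OF c(1)] by blast
  ultimately have "shM C (cmp C f \<psi>) = shM C \<phi>" using shift_comp[OF \<psi>(1) f] by simp
  then show ?thesis using shift_inj hom_comp[OF \<psi>(1) f] assms(2) \<psi>(1) by blast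
qed

lemma triangle_third_zero_of_split_mono:
  assumes "dtri C A B Z s g h" "r \<in> hom C B A" "cmp C r s = idm C A"
  shows "h = mzero C Z (shO C A)"
proof -
  have s: "s \<in> hom C A B" and h: "h \<in> hom C Z (shO C A)" using triangle_hom[OF assms(1)] by auto
  have "cmp C (mneg C (shM C s)) h = mzero C Z (shO C B)"
    using triangle_comp_zero[OF triangle_rotate[OF triangle_rotate[OF assms(1)]]] .
  then have sh: "cmp C (shM C s) h = mzero C Z (shO C B)"
    using comp_neg_left[OF h shift_hom[OF s]] neg_eq_zero_iff hom_comp[OF h shift_hom[OF s]] by simp
  have "h = cmp C (shM C (cmp C r s)) h" using assms(3) h by simp
  also have "\<dots> = cmp C (shM C r) (cmp C (shM C s) h)"
    using shift_comp[OF s assms(2)] comp_assoc[OF h shift_hom[OF s] shift_hom[OF assms(2)]] by simp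
  finally show ?thesis using sh assms(2) by simp
qed

lemma triangle_split_epi_of_split_mono:
  assumes "dtri C A B Z s g h" "r \<in> hom C B A" "cmp C r s = idm C A"
  shows "\<exists>t\<in>hom C Z B. cmp C g t = idm C Z"
proof -
  have "cmp C h (idm C Z) = mzero C Z (shO C A)"
    using triangle_third_zero_of_split_mono[OF assms] by simp
  then show ?thesis using triangle_weak_kernel[OF triangle_rotate[OF assms(1)] hom_id] by metis
qed

lemma triangle_hom_ext:
  assumes tr: "dtri C A B Z s g h" and t: "t \<in> hom C Z B" "cmp C g t = idm C Z"
    and d: "d1 \<in> hom C B N" "d2 \<in> hom C B N"
    and ds: "cmp C d1 s = cmp C d2 s" and dt: "cmp C d1 t = cmp C d2 t"
  shows "d1 = d2"
proof -
  have s: "s \<in> hom C A B" and g: "g \<in> hom C B Z" using triangle_hom[OF tr] by auto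
  define d where "d = madd C d1 (mneg C d2)"
  have dhom: "d \<in> hom C B N" unfolding d_def using d by auto
  have diff_comp: "cmp C d x = madd C (cmp C d1 x) (mneg C (cmp C d2 x))" if "x \<in> hom C X B" for x X
    unfolding d_def using comp_distrib_right[OF that d(1) hom_neg[OF d(2)]]
      comp_neg_left[OF that d(2)] by simp
  have "cmp C d s = mzero C A N" using diff_comp[OF s] ds hom_comp[OF s d(2)] by simp
  then obtain d' where d': "d' \<in> hom C Z N" "d = cmp C d' g"
    using triangle_weak_cokernel[OF tr dhom] by blast
  have "d' = cmp C d t" using d' t comp_assoc[OF t(1) g d'(1)] by simp
  also have "\<dots> = mzero C Z N" using diff_comp[OF t(1)] dt hom_comp[OF t(1) d(2)] by simp
  finally have "d = mzero C B N" using d' g by simp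
  then show ?thesis using eq_of_diff_eq_zero[OF d] unfolding d_def by blast
qed

lemma split_mono_biproduct:
  assumes s: "s \<in> hom C A B" and r: "r \<in> hom C B A" and rs: "cmp C r s = idm C A"
  shows "\<exists>Z. is_biproduct C A Z B"
proof -
  obtain Z g h where tr: "dtri C A B Z s g h" using triangle_exists[OF s] by blast
  have g: "g \<in> hom C B Z" using triangle_hom[OF tr] by auto
  obtain t where t: "t \<in> hom C Z B" "cmp C g t = idm C Z"
    using triangle_split_epi_of_split_mono[OF tr r rs] by blast
  have gs: "cmp C g s = mzero C A Z" using triangle_comp_zero[OF tr] .
  have rt: "cmp C r t \<in> hom C Z A" and srt: "cmp C s (cmp C r t) \<in> hom C Z B" using r s t by auto
  define i where "i = madd C t (mneg C (cmp C s (cmp C r t)))"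
  have i: "i \<in> hom C Z B" unfolding i_def using t srt by auto
  have "cmp C g (cmp C s (cmp C r t)) = mzero C Z Z" using comp_assoc[OF rt s g] gs rt by simp
  then have gi: "cmp C g i = idm C Z"
    unfolding i_def using comp_distrib_left[OF t(1) hom_neg[OF srt] g] comp_neg_right[OF srt g] t
    by simp
  have "cmp C r (cmp C s (cmp C r t)) = cmp C r t" using comp_assoc[OF rt s r] rs rt by simp
  then have ri: "cmp C r i = mzero C Z A"
    unfolding i_def using comp_distrib_left[OF t(1) hom_neg[OF srt] r] comp_neg_right[OF srt r] rt
    by simp
  define P where "P = madd C (cmp C s r) (cmp C i g)"
  have sr: "cmp C s r \<in> hom C B B" and ig: "cmp C i g \<in> hom C B B" using s r i g by auto
  have P: "P \<in> hom C B B" unfolding P_def using sr ig by auto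
  have "cmp C P s = madd C (cmp C (cmp C s r) s) (cmp C (cmp C i g) s)"
    unfolding P_def using comp_distrib_right[OF s sr ig] .
  also have "\<dots> = s"
    using comp_assoc[OF s r s, symmetric] comp_assoc[OF s g i, symmetric] rs gs s i by simp
  finally have Ps: "cmp C P s = cmp C (idm C B) s" using s by simp
  have "cmp C P t = madd C (cmp C s (cmp C r t)) i"
    unfolding P_def using comp_distrib_right[OF t(1) sr ig] comp_assoc[OF t(1) r s]
      comp_assoc[OF t(1) g i] t i by simp
  also have "\<dots> = t"
    unfolding i_def using add_commute[OF t(1) hom_neg[OF srt]]
      add_assoc[OF srt hom_neg[OF srt] t(1), symmetric] srt t by simp
  finally have Pt: "cmp C P t = cmp C (idm C B) t" using t by simp
  have "P = idm C B" using triangle_hom_ext[OF tr t P hom_id Ps Pt] .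
  then have "is_biproduct C A Z B"
    unfolding is_biproduct_def P_def using s i r g rs gi ri gs by blast
  then show ?thesis ..
qed

lemma closed_subcat_split_mono:
  assumes "closed_subcat C K" "B \<in> K" "s \<in> hom C A B" "r \<in> hom C B A" "cmp C r s = idm C A"
  shows "A \<in> K"
  using split_mono_biproduct[OF assms(3-5)] assms(1,2) unfolding closed_subcat_def by blast

lemma hom_vanish_desuspend:
  assumes "hom_vanish C A (shift_up C B)" "shO C X \<in> A" "Y \<in> B" "k \<in> hom C X Y"
  shows "k = mzero C X Y"
proof -
  have "shM C k = mzero C (shO C X) (shO C Y)"
    using assms unfolding hom_vanish_def shift_up_def by blast
  then show ?thesis using shift_inj[OF assms(4) hom_zero] by simp
qed

end

locale cotorsion_pair_in = triangulated_cat +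
  fixes A B :: "'o set"
  assumes cotorsion: "cotorsion_pair C A B"
begin

lemma closed_left: "closed_subcat C A"
  and closed_right: "closed_subcat C B"
  and hom_left_shift_right: "hom_vanish C A (shift_up C B)"
  using cotorsion unfolding cotorsion_pair_def by blast+

lemma left_approximation: "\<exists>A0 B0 f g h. A0 \<in> A \<and> B0 \<in> B \<and> dtri C A0 Y (shO C B0) f g h"
proof -
  have "Y \<in> star C A (shift_up C B)" using cotorsion unfolding cotorsion_pair_def by blast
  then show ?thesis unfolding star_def shift_up_def by blast
qed

lemma right_approximation: "\<exists>X0 B0 a b c. shO C X0 \<in> A \<and> B0 \<in> B \<and> dtri C X0 Y B0 a b c"
proof -
  have "shO C Y \<in> star C A (shift_up C B)" using cotorsion unfolding cotorsion_pair_def by blast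
  then obtain A0 B0 f g h where "A0 \<in> A" "B0 \<in> B" "dtri C A0 (shO C Y) (shO C B0) f g h"
    unfolding star_def shift_up_def by blast
  moreover obtain X0 where "shO C X0 = A0" using shift_obj_surj by blast
  ultimately show ?thesis using triangle_rotate_back by metis
qed

lemma left_memI:
  assumes "\<And>B0 \<phi>. B0 \<in> B \<Longrightarrow> \<phi> \<in> hom C Y (shO C B0) \<Longrightarrow> \<phi> = mzero C Y (shO C B0)"
  shows "Y \<in> A"
proof -
  obtain A0 B0 f g h where tr: "A0 \<in> A" "B0 \<in> B" "dtri C A0 Y (shO C B0) f g h"
    using left_approximation by blast
  have f: "f \<in> hom C A0 Y" and g: "g \<in> hom C Y (shO C B0)" using triangle_hom[OF tr(3)] by auto
  have "cmp C g (idm C Y) = mzero C Y (shO C B0)" using assms[OF tr(2) g] g by simp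
  then obtain s where "s \<in> hom C Y A0" "idm C Y = cmp C f s"
    using triangle_weak_kernel[OF tr(3) hom_id] by blast
  then show ?thesis using closed_subcat_split_mono[OF closed_left tr(1) _ f] by simp
qed

lemma right_memI:
  assumes "\<And>X0 k. shO C X0 \<in> A \<Longrightarrow> k \<in> hom C X0 Y \<Longrightarrow> k = mzero C X0 Y"
  shows "Y \<in> B"
proof -
  obtain X0 B0 a b c where tr: "shO C X0 \<in> A" "B0 \<in> B" "dtri C X0 Y B0 a b c"
    using right_approximation by blast
  have a: "a \<in> hom C X0 Y" and b: "b \<in> hom C Y B0" using triangle_hom[OF tr(3)] by auto
  have "cmp C (idm C Y) a = mzero C X0 Y" using assms[OF tr(1) a] a by simp
  then obtain p where "p \<in> hom C B0 Y" "idm C Y = cmp C p b"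
    using triangle_weak_cokernel[OF tr(3) hom_id] by blast
  then show ?thesis using closed_subcat_split_mono[OF closed_right tr(2) b] by simp
qed

lemma left_closed_eqW_retract:
  assumes "hom_vanish C W (shift_up C B)" "Y \<in> A"
    and "f \<in> hom C L Y" "g \<in> hom C Y L" "eqW C W L L (cmp C g f) (idm C L)"
  shows "L \<in> A"
proof (rule left_memI)
  fix B0 \<phi> assume "B0 \<in> B" and \<phi>: "\<phi> \<in> hom C L (shO C B0)"
  then have "hom_vanish C W {shO C B0}"
    using assms(1) unfolding hom_vanish_def shift_up_def by blast
  moreover have "cmp C \<phi> g = mzero C Y (shO C B0)"
    using hom_left_shift_right \<open>B0 \<in> B\<close> assms(2,4) \<phi> unfolding hom_vanish_def shift_up_def by blast
  ultimately show "\<phi> = mzero C L (shO C B0)"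
    using eqW_retract_vanish_target[OF assms(3-5) _ \<phi>] by blast
qed

lemma right_closed_eqW_retract:
  assumes "hom_vanish C (shift_down C A) W" "Y \<in> B"
    and "f \<in> hom C R Y" "g \<in> hom C Y R" "eqW C W R R (cmp C g f) (idm C R)"
  shows "R \<in> B"
proof (rule right_memI)
  fix X0 k assume X0: "shO C X0 \<in> A" and k: "k \<in> hom C X0 R"
  then have "hom_vanish C {X0} W" using assms(1) unfolding hom_vanish_def shift_down_def by blast
  moreover have "cmp C f k = mzero C X0 Y"
    using hom_vanish_desuspend[OF hom_left_shift_right X0 assms(2)] assms(3) k by blast
  ultimately show "k = mzero C X0 R"
    using eqW_retract_vanish_source[OF assms(3-5) _ k] by blast
qed

end

locale twin_cotorsion_pair_in = triangulated_cat +
  fixes S T U V :: "'o set"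
  assumes twin: "twin_cotorsion_pair C S T U V"

sublocale twin_cotorsion_pair_in \<subseteq> ST: cotorsion_pair_in C S T
  using twin by unfold_locales (simp add: twin_cotorsion_pair_def)

sublocale twin_cotorsion_pair_in \<subseteq> UV: cotorsion_pair_in C U V
  using twin by unfold_locales (simp add: twin_cotorsion_pair_def)

context twin_cotorsion_pair_in
begin

abbreviation "W \<equiv> Wcl S T U V"

lemma closed_W: "closed_subcat C W"
  unfolding Wcl_def using closed_subcat_Int[OF UV.closed_left ST.closed_right] .

lemma hom_S_shift_V: "hom_vanish C S (shift_up C V)"
  using twin unfolding twin_cotorsion_pair_def by blast

lemma hom_W_shift_V: "hom_vanish C W (shift_up C V)"
  using UV.hom_left_shift_right unfolding hom_vanish_def Wcl_def by blast

lemma hom_unshift_S_W: "hom_vanish C (shift_down C S) W"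
  using hom_vanish_desuspend[OF ST.hom_left_shift_right]
  unfolding hom_vanish_def shift_down_def Wcl_def by blast

lemma hom_W_shift_V_obj: "V0 \<in> V \<Longrightarrow> hom_vanish C W {shO C V0}"
  using hom_W_shift_V unfolding hom_vanish_def shift_up_def by blast

lemma hom_unshift_S_obj_W: "shO C X0 \<in> S \<Longrightarrow> hom_vanish C {X0} W"
  using hom_unshift_S_W unfolding hom_vanish_def shift_down_def by blast

lemma W_in_Cplus: assumes "Y \<in> W" shows "Y \<in> Cplus C S T U V"
proof -
  obtain Z where Z: "zero_obj C Z" using zero_obj_exists by blast
  have "shO C Z \<in> shift_up C V"
    unfolding shift_up_def by (rule imageI[OF closed_subcat_zero_obj[OF UV.closed_right Z]])
  then show ?thesis
    unfolding Cplus_def by (rule star_memI[OF assms _ triangle_id[OF zero_obj_shift[OF Z]]])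
qed

lemma shift_V_in_Cplus: assumes "V0 \<in> V" shows "shO C V0 \<in> Cplus C S T U V"
proof -
  obtain Z where Z: "zero_obj C Z" using zero_obj_exists by blast
  have "shO C V0 \<in> shift_up C V" unfolding shift_up_def using assms by (rule imageI)
  then show ?thesis
    unfolding Cplus_def
    by (rule star_memI[OF closed_subcat_zero_obj[OF closed_W Z] _ triangle_zero_left[OF Z]])
qed

lemma unshift_S_in_Cminus: assumes "shO C X0 \<in> S" shows "X0 \<in> Cminus C S T U V"
proof -
  obtain Z where Z: "zero_obj C Z" using zero_obj_exists by blast
  have "X0 \<in> shift_down C S" unfolding shift_down_def using assms by simp
  then show ?thesis
    unfolding Cminus_def
    by (rule star_memI[OF _ closed_subcat_zero_obj[OF closed_W Z] triangle_id[OF Z]])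
qed

lemma Cplus_triangle:
  assumes "Y \<in> Cplus C S T U V"
  obtains W1 V1 w r k where "W1 \<in> W" "V1 \<in> V" "dtri C W1 Y (shO C V1) w r k"
  using assms unfolding Cplus_def star_def shift_up_def by blast

lemma Cminus_triangle:
  assumes "Y \<in> Cminus C S T U V"
  obtains X1 W1 t q k where "shO C X1 \<in> S" "W1 \<in> W" "dtri C X1 Y W1 t q k"
  using assms unfolding Cminus_def star_def shift_down_def by blast

lemma U_in_Cminus: assumes "U0 \<in> U" shows "U0 \<in> Cminus C S T U V"
proof -
  obtain X0 T0 a b c where tr: "shO C X0 \<in> S" "T0 \<in> T" "dtri C X0 U0 T0 a b c"
    using ST.right_approximation by blast
  have b: "b \<in> hom C U0 T0" and c: "c \<in> hom C T0 (shO C X0)" using triangle_hom[OF tr(3)] by auto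
  have "T0 \<in> U"
  proof (rule UV.left_memI)
    fix V0 \<phi> assume V0: "V0 \<in> V" and \<phi>: "\<phi> \<in> hom C T0 (shO C V0)"
    have "cmp C \<phi> b = mzero C U0 (shO C V0)"
      using UV.hom_left_shift_right assms V0 b \<phi> unfolding hom_vanish_def shift_up_def by blast
    then obtain \<psi> where "\<psi> \<in> hom C (shO C X0) (shO C V0)" "\<phi> = cmp C \<psi> c"
      using triangle_weak_cokernel[OF triangle_rotate[OF tr(3)] \<phi>] by blast
    moreover from calculation have "\<psi> = mzero C (shO C X0) (shO C V0)"
      using hom_S_shift_V tr(1) V0 unfolding hom_vanish_def shift_up_def by blast
    ultimately show "\<phi> = mzero C T0 (shO C V0)" using c by simp
  qed
  moreover have "X0 \<in> shift_down C S" unfolding shift_down_def using tr(1) by simp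
  ultimately show ?thesis
    unfolding Cminus_def Wcl_def using star_memI[OF _ _ tr(3)] tr(2) by blast
qed

lemma T_in_Cplus: assumes "T0 \<in> T" shows "T0 \<in> Cplus C S T U V"
proof -
  obtain U0 V0 f g h where tr: "U0 \<in> U" "V0 \<in> V" "dtri C U0 T0 (shO C V0) f g h"
    using UV.left_approximation by blast
  obtain f' where tr': "dtri C V0 U0 T0 f' f g" using triangle_rotate_back[OF tr(3)] by blast
  have f: "f \<in> hom C U0 T0" and f': "f' \<in> hom C V0 U0" using triangle_hom[OF tr'] by auto
  have "U0 \<in> T"
  proof (rule ST.right_memI)
    fix X0 k assume X0: "shO C X0 \<in> S" and k: "k \<in> hom C X0 U0"
    have "cmp C f k = mzero C X0 T0"
      using hom_vanish_desuspend[OF ST.hom_left_shift_right X0 assms] f k by blast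
    then obtain k' where "k' \<in> hom C X0 V0" "k = cmp C f' k'"
      using triangle_weak_kernel[OF tr' k] by blast
    moreover from calculation have "k' = mzero C X0 V0"
      using hom_vanish_desuspend[OF hom_S_shift_V X0 tr(2)] by blast
    ultimately show "k = mzero C X0 U0" using f' by simp
  qed
  moreover have "shO C V0 \<in> shift_up C V" unfolding shift_up_def using tr(2) by (rule imageI)
  ultimately show ?thesis
    unfolding Cplus_def Wcl_def using star_memI[OF _ _ tr(3)] tr(1) by blast
qed

lemma isoW_U_iff: "(\<exists>Y\<in>U. isoW C W L Y) \<longleftrightarrow> L \<in> U"
  using UV.left_closed_eqW_retract[OF hom_W_shift_V] isoW_refl[OF closed_W]
  unfolding isoW_def by blast

lemma isoW_T_iff: "(\<exists>Y\<in>T. isoW C W R Y) \<longleftrightarrow> R \<in> T"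
  using ST.right_closed_eqW_retract[OF hom_unshift_S_W] isoW_refl[OF closed_W]
  unfolding isoW_def by blast

lemma reflection_trivial_iff:
  assumes refl: "reflection C W (Cplus C S T U V) L R eta"
  shows "factors_through C W R R (idm C R) \<longleftrightarrow> L \<in> U"
proof
  have eta: "eta \<in> hom C L R" using refl unfolding reflection_def by blast
  assume idR: "factors_through C W R R (idm C R)"
  show "L \<in> U"
  proof (rule UV.left_memI)
    fix V0 \<phi> assume V0: "V0 \<in> V" and \<phi>: "\<phi> \<in> hom C L (shO C V0)"
    have vanish: "hom_vanish C W {shO C V0}" using hom_W_shift_V_obj[OF V0] .
    obtain \<psi> where \<psi>: "\<psi> \<in> hom C R (shO C V0)" "cmp C \<psi> eta = \<phi>"
      using reflection_extend[OF refl shift_V_in_Cplus[OF V0] vanish \<phi>] by blast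
    have "\<psi> = mzero C R (shO C V0)"
      using factors_through_vanish_target[OF vanish factors_through_comp_left[OF idR \<psi>(1)]] \<psi>(1)
      by simp
    then show "\<phi> = mzero C L (shO C V0)" using \<psi>(2) eta by simp
  qed
next
  have R: "R \<in> Cplus C S T U V" and eta: "eta \<in> hom C L R"
    using refl unfolding reflection_def by blast+
  assume "L \<in> U"
  obtain W1 V1 w r k where tr: "W1 \<in> W" "V1 \<in> V" "dtri C W1 R (shO C V1) w r k"
    using R by (rule Cplus_triangle)
  have w: "w \<in> hom C W1 R" and r: "r \<in> hom C R (shO C V1)" using triangle_hom[OF tr(3)] by auto
  have "cmp C r eta = mzero C L (shO C V1)"
    using UV.hom_left_shift_right \<open>L \<in> U\<close> tr(2) eta r unfolding hom_vanish_def shift_up_def by blast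
  then obtain \<sigma> where "\<sigma> \<in> hom C L W1" "eta = cmp C w \<sigma>"
    using triangle_weak_kernel[OF tr(3) eta] by blast
  then obtain \<mu> where \<mu>: "\<mu> \<in> hom C R W1" "eqW C W R R (cmp C w \<mu>) (idm C R)"
    using reflection_retract[OF refl W_in_Cplus[OF tr(1)] _ w] by blast
  then show "factors_through C W R R (idm C R)"
    using factors_through_eqW[OF closed_W \<mu>(2) factors_throughI[OF tr(1) \<mu>(1) w]
        hom_comp[OF \<mu>(1) w] hom_id] by blast
qed

lemma coreflection_comp_vanishes:
  assumes corefl: "coreflection C W (Cminus C S T U V) X L eps"
    and tr: "dtri C X0 X T0 a b k" "T0 \<in> T"
    and e: "e \<in> hom C X N" "hom_vanish C W {N}" "cmp C e a = mzero C X0 N"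
  shows "cmp C e eps = mzero C L N"
proof -
  have L: "L \<in> Cminus C S T U V" and eps: "eps \<in> hom C L X"
    using corefl unfolding coreflection_def by blast+
  obtain X1 W1 t q k1 where tr1: "shO C X1 \<in> S" "W1 \<in> W" "dtri C X1 L W1 t q k1"
    using L by (rule Cminus_triangle)
  have t: "t \<in> hom C X1 L" and q: "q \<in> hom C L W1" using triangle_hom[OF tr1(3)] by auto
  have a: "a \<in> hom C X0 X" and b: "b \<in> hom C X T0" using triangle_hom[OF tr(1)] by auto
  have "cmp C b (cmp C eps t) = mzero C X1 T0"
    using hom_vanish_desuspend[OF ST.hom_left_shift_right tr1(1) tr(2)] t eps b by blast
  then obtain \<zeta> where \<zeta>: "\<zeta> \<in> hom C X1 X0" "cmp C eps t = cmp C a \<zeta>"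
    using triangle_weak_kernel[OF tr(1)] t eps by blast
  have "cmp C (cmp C e eps) t = cmp C (cmp C e a) \<zeta>"
    using comp_assoc[OF t eps e(1)] comp_assoc[OF \<zeta>(1) a e(1)] \<zeta>(2) by simp
  then have "cmp C (cmp C e eps) t = mzero C X1 N" using e(3) \<zeta>(1) by simp
  then obtain \<xi> where "\<xi> \<in> hom C W1 N" "cmp C e eps = cmp C \<xi> q"
    using triangle_weak_cokernel[OF tr1(3)] eps e(1) by blast
  moreover from calculation have "\<xi> = mzero C W1 N"
    using e(2) tr1(2) unfolding hom_vanish_def by blast
  ultimately show ?thesis using q by simp
qed

lemma reflection_comp_vanishes:
  assumes refl: "reflection C W (Cplus C S T U V) X R eta"
    and tr: "dtri C U0 X (shO C V0) c e h" "U0 \<in> U"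
    and a: "a \<in> hom C N X" "hom_vanish C {N} W" "cmp C e a = mzero C N (shO C V0)"
  shows "cmp C eta a = mzero C N R"
proof -
  have R: "R \<in> Cplus C S T U V" and eta: "eta \<in> hom C X R"
    using refl unfolding reflection_def by blast+
  obtain W1 V1 w r k1 where tr1: "W1 \<in> W" "V1 \<in> V" "dtri C W1 R (shO C V1) w r k1"
    using R by (rule Cplus_triangle)
  have w: "w \<in> hom C W1 R" and r: "r \<in> hom C R (shO C V1)" using triangle_hom[OF tr1(3)] by auto
  have c: "c \<in> hom C U0 X" and e: "e \<in> hom C X (shO C V0)" using triangle_hom[OF tr(1)] by auto
  have "cmp C (cmp C r eta) c = mzero C U0 (shO C V1)"
    using UV.hom_left_shift_right tr(2) tr1(2) c eta r
    unfolding hom_vanish_def shift_up_def by blast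
  then obtain \<zeta> where \<zeta>: "\<zeta> \<in> hom C (shO C V0) (shO C V1)" "cmp C r eta = cmp C \<zeta> e"
    using triangle_weak_cokernel[OF tr(1)] eta r by blast
  have "cmp C r (cmp C eta a) = cmp C \<zeta> (cmp C e a)"
    using comp_assoc[OF a(1) eta r] comp_assoc[OF a(1) e \<zeta>(1)] \<zeta>(2) by simp
  then have "cmp C r (cmp C eta a) = mzero C N (shO C V1)" using a(3) \<zeta>(1) by simp
  then obtain \<xi> where "\<xi> \<in> hom C N W1" "cmp C eta a = cmp C w \<xi>"
    using triangle_weak_kernel[OF tr1(3)] eta a(1) by blast
  moreover from calculation have "\<xi> = mzero C N W1"
    using a(2) tr1(1) unfolding hom_vanish_def by blast
  ultimately show ?thesis using w by simp
qed

lemma coreflection_in_U_iff: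
  assumes corefl: "coreflection C W (Cminus C S T U V) X L eps"
    and left: "dtri C U0 X (shO C V0) c e h" "U0 \<in> U" "V0 \<in> V"
    and right: "dtri C X0 X T0 a b k" "shO C X0 \<in> S" "T0 \<in> T"
  shows "L \<in> U \<longleftrightarrow> cmp C e a = mzero C X0 (shO C V0)"
proof
  have eps: "eps \<in> hom C L X" using corefl unfolding coreflection_def by blast
  have e: "e \<in> hom C X (shO C V0)" and a: "a \<in> hom C X0 X"
    using triangle_hom[OF left(1)] triangle_hom[OF right(1)] by auto
  assume "L \<in> U"
  then have "cmp C e eps = mzero C L (shO C V0)"
    using UV.hom_left_shift_right left(3) eps e unfolding hom_vanish_def shift_up_def by blast
  moreover obtain \<alpha> where "\<alpha> \<in> hom C X0 L" "cmp C eps \<alpha> = a"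
    using coreflection_lift[OF corefl unshift_S_in_Cminus[OF right(2)]
        hom_unshift_S_obj_W[OF right(2)] a] by blast
  ultimately show "cmp C e a = mzero C X0 (shO C V0)"
    using comp_assoc[of \<alpha> X0 L eps X e] eps e by simp
next
  have eps: "eps \<in> hom C L X" using corefl unfolding coreflection_def by blast
  have c: "c \<in> hom C U0 X" and e: "e \<in> hom C X (shO C V0)"
    using triangle_hom[OF left(1)] by auto
  assume "cmp C e a = mzero C X0 (shO C V0)"
  then have "cmp C e eps = mzero C L (shO C V0)"
    using coreflection_comp_vanishes[OF corefl right(1,3) e hom_W_shift_V_obj[OF left(3)]] by blast
  then obtain l where l: "l \<in> hom C L U0" "eps = cmp C c l"
    using triangle_weak_kernel[OF left(1) eps] by blast
  then obtain \<mu> where "\<mu> \<in> hom C U0 L" "eqW C W L L (cmp C \<mu> l) (idm C L)"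
    using coreflection_retract[OF corefl U_in_Cminus[OF left(2)] c] by blast
  then show "L \<in> U" using UV.left_closed_eqW_retract[OF hom_W_shift_V left(2) l(1)] by blast
qed

lemma reflection_in_T_iff:
  assumes refl: "reflection C W (Cplus C S T U V) X R eta"
    and left: "dtri C U0 X (shO C V0) c e h" "U0 \<in> U" "V0 \<in> V"
    and right: "dtri C X0 X T0 a b k" "shO C X0 \<in> S" "T0 \<in> T"
  shows "R \<in> T \<longleftrightarrow> cmp C e a = mzero C X0 (shO C V0)"
proof
  have eta: "eta \<in> hom C X R" using refl unfolding reflection_def by blast
  have e: "e \<in> hom C X (shO C V0)" and a: "a \<in> hom C X0 X"
    using triangle_hom[OF left(1)] triangle_hom[OF right(1)] by auto
  assume "R \<in> T"
  then have "cmp C eta a = mzero C X0 R"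
    using hom_vanish_desuspend[OF ST.hom_left_shift_right right(2)] eta a by blast
  moreover obtain \<psi> where "\<psi> \<in> hom C R (shO C V0)" "cmp C \<psi> eta = e"
    using reflection_extend[OF refl shift_V_in_Cplus[OF left(3)] hom_W_shift_V_obj[OF left(3)] e]
    by blast
  ultimately show "cmp C e a = mzero C X0 (shO C V0)" using comp_assoc[OF a eta] by fastforce
next
  have eta: "eta \<in> hom C X R" using refl unfolding reflection_def by blast
  have a: "a \<in> hom C X0 X" and b: "b \<in> hom C X T0" using triangle_hom[OF right(1)] by auto
  assume "cmp C e a = mzero C X0 (shO C V0)"
  then have "cmp C eta a = mzero C X0 R"
    using reflection_comp_vanishes[OF refl left(1,2) a hom_unshift_S_obj_W[OF right(2)]] by blast
  then obtain l where l: "l \<in> hom C T0 R" "eta = cmp C l b"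
    using triangle_weak_cokernel[OF right(1) eta] by blast
  then obtain \<mu> where "\<mu> \<in> hom C R T0" "eqW C W R R (cmp C l \<mu>) (idm C R)"
    using reflection_retract[OF refl T_in_Cplus[OF right(3)] b] by blast
  then show "R \<in> T" using ST.right_closed_eqW_retract[OF hom_unshift_S_W right(3) _ l(1)] by blast
qed

end

theorem proposition2p17:
  fixes C :: "('o, 'm) tricat" and S T U V :: "'o set"
    and X L R R' :: 'o and eps eta eta' :: 'm
  assumes "triangulated C"
    and "twin_cotorsion_pair C S T U V"
    and tau_minus: "coreflection C (Wcl S T U V) (Cminus C S T U V) X L eps"
    and H: "reflection C (Wcl S T U V) (Cplus C S T U V) L R eta"
    and tau_plus: "reflection C (Wcl S T U V) (Cplus C S T U V) X R' eta'"
  shows "((\<exists>Z. zero_obj C Z \<and> isoW C (Wcl S T U V) R Z)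
            \<longleftrightarrow> (\<exists>Y\<in>U. isoW C (Wcl S T U V) L Y))
       \<and> ((\<exists>Y\<in>U. isoW C (Wcl S T U V) L Y)
            \<longleftrightarrow> (\<exists>Y\<in>T. isoW C (Wcl S T U V) R' Y))"
proof -
  interpret twin_cotorsion_pair_in C S T U V using assms(1,2) by unfold_locales
  obtain U0 V0 c e h where left: "dtri C U0 X (shO C V0) c e h" "U0 \<in> U" "V0 \<in> V"
    using UV.left_approximation by blast
  obtain X0 T0 a b k where right: "dtri C X0 X T0 a b k" "shO C X0 \<in> S" "T0 \<in> T"
    using ST.right_approximation by blast
  have "(\<exists>Z. zero_obj C Z \<and> isoW C W R Z) \<longleftrightarrow> L \<in> U"
    using isoW_zero_obj_iff[OF closed_W] reflection_trivial_iff[OF H] zero_obj_exists by blast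
  moreover have "L \<in> U \<longleftrightarrow> R' \<in> T"
    using coreflection_in_U_iff[OF tau_minus left right] reflection_in_T_iff[OF tau_plus left right]
    by simp
  ultimately show ?thesis using isoW_U_iff isoW_T_iff by blast
qed

end
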